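(* At the terminal level $\mathfrak{m}$, the unique closed communicating class $\mathscr{P}^{\star,\mathfrak{m}}_1$ of $\mathfrak{X}^{\star,\mathfrak{m}}$ consists exactly of the ground states: $$\bigcup_{\mathcal{P}\in\mathscr{P}^{\star,\mathfrak{m}}_1}\mathcal{P}=\mathcal{S}.$$
   Context: Setting. Let $\Omega$ be a finite set with a connected undirected graph structure; write $\eta\sim\xi$ if $\{\eta,\xi\}$ is an edge. Let $\mathbb{H}:\Omega\to\mathbb{R}$. Paths and heights. A path $\omega:\eta\to\xi$ is a sequence $(\omega_n)_{n=0}^N$ with $\omega_0=\eta$, $\omega_N=\xi$ and $\omega_n\sim\omega_{n+1}$ ($N=0$ allowed). Its height is $\Phi_\omega:=\max_n\mathbb{H}(\omega_n)$. Set $\Phi(\eta,\xi):=\min_{\omega:\eta\to\xi}\Phi_\omega$. For nonempty sets, $\Phi(\mathcal{A},\mathcal{B}):=\min_{\eta\in\mathcal{A},\xi\in\mathcal{B}}\Phi(\eta,\xi)$, and $\Phi(\mathcal{A},\eta):=\Phi(\mathcal{A},\{\eta\})$. Ground states. $\mathcal{S}:=\operatorname{argmin}_\Omega\mathbb{H}$, $\overline{\Phi}:=\max_{s,s'\in\mathcal{S}}\Phi(s,s')$, and $\overline{\Omega}:=\{\eta:\Phi(\mathcal{S},\eta)\le\overline{\Phi}\}$. Sets. For $\mathcal{A}\subseteq\Omega$: $\mathcal{F}(\mathcal{A}):=\operatorname{argmin}_{\mathcal{A}}\mathbb{H}$; $\partial\mathcal{A}:=\{\eta\notin\mathcal{A}:\eta\sim\xi\text{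 for some }\xi\in\mathcal{A}\}$; $\partial^\star\mathcal{A}:=\mathcal{F}(\partial\mathcal{A})$. A set is connected if any two of its points are joined by a path inside it. Stable plateaux and cycles. A stable plateau is a nonempty connected set $\mathcal{P}$ with constant energy $\mathbb{H}(\mathcal{P})$ such that $\mathbb{H}>\mathbb{H}(\mathcal{P})$ on $\partial\mathcal{P}$. A cycle is a nonempty connected $\mathcal{C}$ with $\max_{\mathcal{C}}\mathbb{H}<\min_{\partial\mathcal{C}}\mathbb{H}$. Its depth is $\Gamma^{\mathcal{C}}:=\min_{\partial\mathcal{C}}\mathbb{H}-\min_{\mathcal{C}}\mathbb{H}$. General construction (C). Let $\mathscr{C}$ be a collection of pairwise disjoint cycles contained in $\overline{\Omega}$ with $|\mathscr{C}|\ge2$, and let $\Gamma^\star>0$. Put - $\mathscr{C}^\star:=\{\mathcal{C}\in\mathscr{C}:\Gamma^{\mathcal{C}}\ge\Gamma^\star\}$ and $\mathscr{C}^\sharp:=\{\mathcal{C}\in\mathscr{C}:\Gamma^{\mathcal{C}}<\Gamma^\star\}$; - $\mathscr{P}^{\mathscr{C}}:=\{\mathcal{F}(\mathcal{C}):\mathcal{C}\in\mathscr{C}\}$ and $\mathscr{P}^{\mathscr{C}^\star}:=\{\mathcal{F}(\mathcal{C}):\mathcal{C}\in\mathscr{C}^\star\}$; - $\Delta^{\mathscr{C}}:=\overline{\Omega}\setminus\bigcup_{\mathcal{C}\in\mathscr{C}}\mathcal{C}$. Let $\mathfrak{X}^{\mathscr{C}}$ be the continuous-time Markov chain on $\Omega^{\mathscr{C}}:=\Delta^{\mathscr{C}}\cup\mathscr{P}^{\mathscr{C}}$,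 in which each $\mathcal{F}(\mathcal{C})$ is treated as a single point. Its rates are: - $\mathfrak{R}^{\mathscr{C}}(\eta,\xi)=1$ for $\eta,\xi\in\Delta^{\mathscr{C}}$ with $\eta\sim\xi$ and $\mathbb{H}(\xi)\le\mathbb{H}(\eta)$; - $\mathfrak{R}^{\mathscr{C}}(\eta,\mathcal{F}(\mathcal{C}))=|\{\zeta\in\mathcal{C}:\eta\sim\zeta\}|$ for $\eta\in\Delta^{\mathscr{C}}\cap\partial\mathcal{C}$; - $\mathfrak{R}^{\mathscr{C}}(\mathcal{F}(\mathcal{C}),\eta)=|\mathcal{F}(\mathcal{C})|^{-1}|\{\zeta\in\mathcal{C}:\eta\sim\zeta\}|$ if $\Gamma^{\mathcal{C}}\le\Gamma^\star$ and $\eta\in\partial^\star\mathcal{C}$; - all other rates are $0$. The trace chain $\mathfrak{X}^{\mathscr{C}^\star}$ on $\mathscr{P}^{\mathscr{C}^\star}$ has rates, for distinct $\mathcal{C},\mathcal{C}'\in\mathscr{C}^\star$, $$\mathfrak{R}^{\mathscr{C}^\star}(\mathcal{F}(\mathcal{C}),\mathcal{F}(\mathcal{C}')):=\sum_{\eta\in\Delta^{\mathscr{C}}}\mathfrak{R}^{\mathscr{C}}(\mathcal{F}(\mathcal{C}),\eta)\,\mathbf{P}^{\mathscr{C}}_\eta[\mathcal{T}_{\mathcal{F}(\mathcal{C}')}=\mathcal{T}_{\mathscr{P}^{\mathscr{C}^\star}}].$$ Here $\mathbf{P}^{\mathscr{C}}_\eta$ is the law of $\mathfrak{X}^{\mathscr{C}}$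 started at $\eta$, and $\mathcal{T}_{\mathcal{A}}$ is the hitting time of $\mathcal{A}$. Hierarchy. Let $\mathscr{P}^1=\{\mathcal{P}_1^1,\dots,\mathcal{P}^1_{\nu_0}\}$ be the collection of all stable plateaux contained in $\overline{\Omega}$, and assume $\nu_0\ge2$. Suppose that at some level $\mathfrak{h}\ge1$ the sets $\mathcal{P}^{\mathfrak{h}}_1,\dots,\mathcal{P}^{\mathfrak{h}}_{\nu_{\mathfrak{h}-1}}$ are defined, with $\nu_{\mathfrak{h}-1}\ge2$. Then define: - $\mathbb{H}(\mathcal{P}^{\mathfrak{h}}_i):=\min_{\mathcal{P}^{\mathfrak{h}}_i}\mathbb{H}$; - $\mathscr{P}^{\star,\mathfrak{h}}:=\{\mathcal{P}^{\mathfrak{h}}_i:i\in[1,\nu_{\mathfrak{h}-1}]\}$; - $\breve{\mathcal{P}}^{\mathfrak{h}}_i:=\bigcup_{j\ne i}\mathcal{P}^{\mathfrak{h}}_j$; - $\Gamma^{\mathfrak{h}}_i:=\Phi(\mathcal{P}^{\mathfrak{h}}_i,\breve{\mathcal{P}}^{\mathfrak{h}}_i)-\mathbb{H}(\mathcal{P}^{\mathfrak{h}}_i)$ and $\Gamma^{\star,\mathfrak{h}}:=\min_i\Gamma_i^{\mathfrak{h}}$; - $\mathcal{V}^{\mathfrak{h}}_i:=\{\eta\in\Omega:\Phi(\mathcal{P}^{\mathfrak{h}}_i,\eta)-\mathbb{H}(\mathcal{P}^{\mathfrak{h}}_i)<\Gamma^{\mathfrak{h}}_i\}$. Set $\mathscr{C}^1:=\{\mathcal{V}^1_i:i\in[1,\nu_0]\}$.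 For $\mathfrak{h}\ge2$, set $$\mathscr{C}^{\mathfrak{h}}:=\{\mathcal{V}^{\mathfrak{h}}_i:i\in[1,\nu_{\mathfrak{h}-1}]\}\cup\{\mathcal{C}\in\mathscr{C}^{\star,\mathfrak{h}-1}_{\rm tr}\cup\mathscr{C}^{\sharp,\mathfrak{h}-1}:\mathcal{C}\cap\mathcal{V}^{\mathfrak{h}}_i=\emptyset\ \forall i\}.$$ Apply (C) to $(\mathscr{C}^{\mathfrak{h}},\Gamma^{\star,\mathfrak{h}})$. Write $\mathscr{C}^{\star,\mathfrak{h}}:=(\mathscr{C}^{\mathfrak{h}})^\star$ and $\mathscr{C}^{\sharp,\mathfrak{h}}:=(\mathscr{C}^{\mathfrak{h}})^\sharp$. Let $\mathfrak{X}^{\star,\mathfrak{h}}$ be the trace chain of (C) on $\mathscr{P}^{(\mathscr{C}^{\mathfrak{h}})^\star}$. Decompose $\mathscr{P}^{(\mathscr{C}^{\mathfrak{h}})^\star}$ into the closed communicating classes $\mathscr{P}^{\star,\mathfrak{h}}_1,\dots,\mathscr{P}^{\star,\mathfrak{h}}_{\nu_{\mathfrak{h}}}$ of $\mathfrak{X}^{\star,\mathfrak{h}}$ and the set $\mathscr{P}^{\star,\mathfrak{h}}_{\rm tr}$ of transient elements. Let $\mathscr{C}^{\star,\mathfrak{h}}_m:=\{\mathcal{C}\in\mathscr{C}^{\star,\mathfrak{h}}:\mathcal{F}(\mathcal{C})\in\mathscr{P}^{\star,\mathfrak{h}}_m\}$ for $m\in\{1,\dots,\nu_{\mathfrak{h}},{\rm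 tr}\}$. If $\nu_{\mathfrak{h}}\ge2$, define $\mathcal{P}^{\mathfrak{h}+1}_i:=\bigcup_{\mathcal{P}\in\mathscr{P}^{\star,\mathfrak{h}}_i}\mathcal{P}$ for $i\in[1,\nu_{\mathfrak{h}}]$ and continue to level $\mathfrak{h}+1$. The terminal level $\mathfrak{m}$ is the first $\mathfrak{h}$ with $\nu_{\mathfrak{h}}=1$. Finally, $\mathscr{P}^{\star,\mathfrak{h}}_{\rm rec}:=\mathscr{P}^{\star,\mathfrak{h}}_1\cup\dots\cup\mathscr{P}^{\star,\mathfrak{h}}_{\nu_{\mathfrak{h}}}$. Here $[a,b]$ denotes the set of integers from $a$ to $b$. *)

theory Defs
  imports Main "HOL.Real"
begin

text \<open>The finite state space Omega is the universe of a finite type 'a; the graph is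
  given by a symmetric irreflexive adjacency relation E; the energy is H.\<close>

definition is_path :: "('a \<Rightarrow> 'a \<Rightarrow> bool) \<Rightarrow> 'a list \<Rightarrow> 'a \<Rightarrow> 'a \<Rightarrow> bool" where
  "is_path E w x y \<longleftrightarrow> w \<noteq> [] \<and> hd w = x \<and> last w = y \<and> successively E w"

definition path_height :: "('a \<Rightarrow> real) \<Rightarrow> 'a list \<Rightarrow> real" where
  "path_height H w = Max (H ` set w)"

definition Phi :: "('a \<Rightarrow> 'a \<Rightarrow> bool) \<Rightarrow> ('a \<Rightarrow> real) \<Rightarrow> 'a \<Rightarrow> 'a \<Rightarrow> real" where
  "Phi E H x y = Min {path_height H w | w. is_path E w x y}"

definition PhiS :: "('a \<Rightarrow> 'a \<Rightarrow> bool) \<Rightarrow> ('a \<Rightarrow> real) \<Rightarrow> 'a set \<Rightarrow> 'a set \<Rightarrow> real" where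
  "PhiS E H A B = Min {Phi E H x y | x y. x \<in> A \<and> y \<in> B}"

definition ground :: "('a \<Rightarrow> real) \<Rightarrow> 'a set" where
  "ground H = {x. \<forall>y. H x \<le> H y}"

definition Phibar :: "('a \<Rightarrow> 'a \<Rightarrow> bool) \<Rightarrow> ('a \<Rightarrow> real) \<Rightarrow> real" where
  "Phibar E H = Max {Phi E H s s' | s s'. s \<in> ground H \<and> s' \<in> ground H}"

definition Omegabar :: "('a \<Rightarrow> 'a \<Rightarrow> bool) \<Rightarrow> ('a \<Rightarrow> real) \<Rightarrow> 'a set" where
  "Omegabar E H = {x. PhiS E H (ground H) {x} \<le> Phibar E H}"

definition Fmin :: "('a \<Rightarrow> real) \<Rightarrow> 'a set \<Rightarrow> 'a set" where
  "Fmin H A = {x \<in> A. \<forall>y\<in>A. H x \<le> H y}"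

definition bdry :: "('a \<Rightarrow> 'a \<Rightarrow> bool) \<Rightarrow> 'a set \<Rightarrow> 'a set" where
  "bdry E A = {x. x \<notin> A \<and> (\<exists>y\<in>A. E x y)}"

definition bdry_star :: "('a \<Rightarrow> 'a \<Rightarrow> bool) \<Rightarrow> ('a \<Rightarrow> real) \<Rightarrow> 'a set \<Rightarrow> 'a set" where
  "bdry_star E H A = Fmin H (bdry E A)"

definition connected_set :: "('a \<Rightarrow> 'a \<Rightarrow> bool) \<Rightarrow> 'a set \<Rightarrow> bool" where
  "connected_set E A \<longleftrightarrow> (\<forall>x\<in>A. \<forall>y\<in>A. \<exists>w. is_path E w x y \<and> set w \<subseteq> A)"

definition stable_plateau :: "('a \<Rightarrow> 'a \<Rightarrow> bool) \<Rightarrow> ('a \<Rightarrow> real) \<Rightarrow> 'a set \<Rightarrow> bool" where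
  "stable_plateau E H P \<longleftrightarrow> P \<noteq> {} \<and> connected_set E P \<and> (\<forall>x\<in>P. \<forall>y\<in>P. H x = H y)
     \<and> (\<forall>x\<in>P. \<forall>y\<in>bdry E P. H x < H y)"

text \<open>max over C of H < min over the boundary of H (vacuous if the boundary is empty).\<close>
definition is_cycle :: "('a \<Rightarrow> 'a \<Rightarrow> bool) \<Rightarrow> ('a \<Rightarrow> real) \<Rightarrow> 'a set \<Rightarrow> bool" where
  "is_cycle E H C \<longleftrightarrow> C \<noteq> {} \<and> connected_set E C \<and> (\<forall>x\<in>C. \<forall>y\<in>bdry E C. H x < H y)"

definition depth :: "('a \<Rightarrow> 'a \<Rightarrow> bool) \<Rightarrow> ('a \<Rightarrow> real) \<Rightarrow> 'a set \<Rightarrow> real" where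
  "depth E H C = Min (H ` bdry E C) - Min (H ` C)"

definition Cstar :: "('a \<Rightarrow> 'a \<Rightarrow> bool) \<Rightarrow> ('a \<Rightarrow> real) \<Rightarrow> 'a set set \<Rightarrow> real \<Rightarrow> 'a set set" where
  "Cstar E H CC g = {C \<in> CC. depth E H C \<ge> g}"

definition Csharp :: "('a \<Rightarrow> 'a \<Rightarrow> bool) \<Rightarrow> ('a \<Rightarrow> real) \<Rightarrow> 'a set set \<Rightarrow> real \<Rightarrow> 'a set set" where
  "Csharp E H CC g = {C \<in> CC. depth E H C < g}"

definition Delta :: "('a \<Rightarrow> 'a \<Rightarrow> bool) \<Rightarrow> ('a \<Rightarrow> real) \<Rightarrow> 'a set set \<Rightarrow> 'a set" where
  "Delta E H CC = Omegabar E H - \<Union>CC"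

text \<open>States of the collapsed chain: points of Delta, and bottoms F(C) collapsed to one point.\<close>
datatype 'a st = Pt 'a | Pl "'a set"

definition states :: "('a \<Rightarrow> 'a \<Rightarrow> bool) \<Rightarrow> ('a \<Rightarrow> real) \<Rightarrow> 'a set set \<Rightarrow> 'a st set" where
  "states E H CC = Pt ` Delta E H CC \<union> Pl ` (Fmin H ` CC)"

fun rate :: "('a \<Rightarrow> 'a \<Rightarrow> bool) \<Rightarrow> ('a \<Rightarrow> real) \<Rightarrow> 'a set set \<Rightarrow> real \<Rightarrow> 'a st \<Rightarrow> 'a st \<Rightarrow> real" where
  "rate E H CC g (Pt x) (Pt y) =
     (if x \<in> Delta E H CC \<and> y \<in> Delta E H CC \<and> E x y \<and> H y \<le> H x then 1 else 0)"
| "rate E H CC g (Pt x) (Pl P) =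
     (if x \<in> Delta E H CC then
        (\<Sum>C\<in>{C \<in> CC. Fmin H C = P}. if x \<in> bdry E C then real (card {z \<in> C. E x z}) else 0)
      else 0)"
| "rate E H CC g (Pl P) (Pt y) =
     (if y \<in> Delta E H CC then
        (\<Sum>C\<in>{C \<in> CC. Fmin H C = P}.
           if depth E H C \<le> g \<and> y \<in> bdry_star E H C
           then real (card {z \<in> C. E y z}) / real (card P) else 0)
      else 0)"
| "rate E H CC g (Pl P) (Pl Q) = 0"

text \<open>Embedded jump chain (hitting probabilities of the continuous-time chain coincide
  with those of its jump chain). Absorbing states (total rate 0) never move.\<close>
definition jump :: "('a \<Rightarrow> 'a \<Rightarrow> bool) \<Rightarrow> ('a \<Rightarrow> real) \<Rightarrow> 'a set set \<Rightarrow> real \<Rightarrow> 'a st \<Rightarrow> 'a st \<Rightarrow> real" where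
  "jump E H CC g x y = rate E H CC g x y / (\<Sum>z\<in>states E H CC. rate E H CC g x z)"

text \<open>hit_step^n applied to 0: probability that the hitting time of A is at most n steps
  and the chain enters A at the state t.\<close>
definition hit_step :: "('a \<Rightarrow> 'a \<Rightarrow> bool) \<Rightarrow> ('a \<Rightarrow> real) \<Rightarrow> 'a set set \<Rightarrow> real \<Rightarrow> 'a st set \<Rightarrow> 'a st
    \<Rightarrow> ('a st \<Rightarrow> real) \<Rightarrow> 'a st \<Rightarrow> real" where
  "hit_step E H CC g A t f x =
     (if x \<in> A then (if x = t then 1 else 0)
      else (\<Sum>y\<in>states E H CC. jump E H CC g x y * f y))"

text \<open>P_x[T_t = T_A < infinity]\<close>
definition hit_prob :: "('a \<Rightarrow> 'a \<Rightarrow> bool) \<Rightarrow> ('a \<Rightarrow> real) \<Rightarrow> 'a set set \<Rightarrow> real \<Rightarrow> 'a st set \<Rightarrow> 'a st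
    \<Rightarrow> 'a st \<Rightarrow> real" where
  "hit_prob E H CC g A t x = (SUP n. ((hit_step E H CC g A t ^^ n) (\<lambda>_. 0)) x)"

definition trace_rate :: "('a \<Rightarrow> 'a \<Rightarrow> bool) \<Rightarrow> ('a \<Rightarrow> real) \<Rightarrow> 'a set set \<Rightarrow> real \<Rightarrow> 'a set \<Rightarrow> 'a set \<Rightarrow> real" where
  "trace_rate E H CC g P Q =
     (\<Sum>y\<in>Delta E H CC. rate E H CC g (Pl P) (Pt y)
        * hit_prob E H CC g (Pl ` (Fmin H ` Cstar E H CC g)) (Pl Q) (Pt y))"

definition Pstar :: "('a \<Rightarrow> 'a \<Rightarrow> bool) \<Rightarrow> ('a \<Rightarrow> real) \<Rightarrow> 'a set set \<Rightarrow> real \<Rightarrow> 'a set set" where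
  "Pstar E H CC g = Fmin H ` Cstar E H CC g"

definition reach :: "('a \<Rightarrow> 'a \<Rightarrow> bool) \<Rightarrow> ('a \<Rightarrow> real) \<Rightarrow> 'a set set \<Rightarrow> real \<Rightarrow> 'a set \<Rightarrow> 'a set \<Rightarrow> bool" where
  "reach E H CC g = (\<lambda>P Q. P \<in> Pstar E H CC g \<and> Q \<in> Pstar E H CC g \<and> P \<noteq> Q
                              \<and> trace_rate E H CC g P Q > 0)\<^sup>*\<^sup>*"

definition closed_classes :: "('a \<Rightarrow> 'a \<Rightarrow> bool) \<Rightarrow> ('a \<Rightarrow> real) \<Rightarrow> 'a set set \<Rightarrow> real \<Rightarrow> 'a set set set" where
  "closed_classes E H CC g =
     {{Q \<in> Pstar E H CC g. reach E H CC g P Q \<and> reach E H CC g Q P} | P.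
        P \<in> Pstar E H CC g \<and> (\<forall>Q. reach E H CC g P Q \<longrightarrow> reach E H CC g Q P)}"

definition transient :: "('a \<Rightarrow> 'a \<Rightarrow> bool) \<Rightarrow> ('a \<Rightarrow> real) \<Rightarrow> 'a set set \<Rightarrow> real \<Rightarrow> 'a set set" where
  "transient E H CC g = Pstar E H CC g - \<Union>(closed_classes E H CC g)"

text \<open>A level is described by the family Ps of the sets P^h_i and by the family prev of
  cycles C^{*,h-1}_tr \<union> C^{#,h-1} inherited from the previous level (empty at level 1).\<close>

definition Hmin :: "('a \<Rightarrow> real) \<Rightarrow> 'a set \<Rightarrow> real" where
  "Hmin H P = Min (H ` P)"

definition Gam :: "('a \<Rightarrow> 'a \<Rightarrow> bool) \<Rightarrow> ('a \<Rightarrow> real) \<Rightarrow> 'a set set \<Rightarrow> 'a set \<Rightarrow> real" where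
  "Gam E H Ps P = PhiS E H P (\<Union>(Ps - {P})) - Hmin H P"

definition Gstar :: "('a \<Rightarrow> 'a \<Rightarrow> bool) \<Rightarrow> ('a \<Rightarrow> real) \<Rightarrow> 'a set set \<Rightarrow> real" where
  "Gstar E H Ps = Min (Gam E H Ps ` Ps)"

definition Vset :: "('a \<Rightarrow> 'a \<Rightarrow> bool) \<Rightarrow> ('a \<Rightarrow> real) \<Rightarrow> 'a set set \<Rightarrow> 'a set \<Rightarrow> 'a set" where
  "Vset E H Ps P = {x. PhiS E H P {x} - Hmin H P < Gam E H Ps P}"

definition level_cycles :: "('a \<Rightarrow> 'a \<Rightarrow> bool) \<Rightarrow> ('a \<Rightarrow> real) \<Rightarrow> 'a set set \<times> 'a set set \<Rightarrow> 'a set set" where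
  "level_cycles E H L = (let Ps = fst L; prev = snd L in
     Vset E H Ps ` Ps \<union> {C \<in> prev. \<forall>P\<in>Ps. C \<inter> Vset E H Ps P = {}})"

definition level_classes :: "('a \<Rightarrow> 'a \<Rightarrow> bool) \<Rightarrow> ('a \<Rightarrow> real) \<Rightarrow> 'a set set \<times> 'a set set \<Rightarrow> 'a set set set" where
  "level_classes E H L = closed_classes E H (level_cycles E H L) (Gstar E H (fst L))"

definition next_level :: "('a \<Rightarrow> 'a \<Rightarrow> bool) \<Rightarrow> ('a \<Rightarrow> real) \<Rightarrow> 'a set set \<times> 'a set set \<Rightarrow> 'a set set \<times> 'a set set" where
  "next_level E H L = (let CC = level_cycles E H L; g = Gstar E H (fst L) in
     ((\<lambda>K. \<Union>K) ` closed_classes E H CC g,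
      {C \<in> Cstar E H CC g. Fmin H C \<in> transient E H CC g} \<union> Csharp E H CC g))"

definition plateaux1 :: "('a \<Rightarrow> 'a \<Rightarrow> bool) \<Rightarrow> ('a \<Rightarrow> real) \<Rightarrow> 'a set set" where
  "plateaux1 E H = {P. stable_plateau E H P \<and> P \<subseteq> Omegabar E H}"

text \<open>Data of level h (for h \<ge> 1).\<close>
definition level :: "('a \<Rightarrow> 'a \<Rightarrow> bool) \<Rightarrow> ('a \<Rightarrow> real) \<Rightarrow> nat \<Rightarrow> 'a set set \<times> 'a set set" where
  "level E H h = (next_level E H ^^ (h - 1)) (plateaux1 E H, {})"

definition nu :: "('a \<Rightarrow> 'a \<Rightarrow> bool) \<Rightarrow> ('a \<Rightarrow> real) \<Rightarrow> nat \<Rightarrow> nat" where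
  "nu E H h = card (level_classes E H (level E H h))"

end

theory Submission
  imports Defs
begin

(* A ground state s lies in some set P of the current level and is a lowest point of the valley
   V(P), whose depth is at least Gamma-star. Started from the bottom of such a cycle, the collapsed
   chain leaves it at height Gamma-star + min H, and the height of the lowest exit of its position
   never increases afterwards. Every deep cycle has its lowest exit at height at least
   Gamma-star + min H, so the next deep cycle entered has equality: its bottom consists of ground
   states, and every move on the way can be undone. Hence the communicating class of a ground
   bottom in the trace chain is closed and contains only ground bottoms; as every ground state lies
   in such a bottom, a unique closed class is exactly the set of ground states. What this needs of
   a level (its sets are nonempty, cover the ground states, and are separated by barriers above
   their minima) passes from each level to the next, starting from the stable plateaux. *)

lemma sum_pos_iff_ex_pos:
  fixes f :: "'b \<Rightarrow> real"
  assumes "finite A" "\<And>x. x \<in> A \<Longrightarrow> 0 \<le> f x"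
  shows "0 < sum f A \<longleftrightarrow> (\<exists>x\<in>A. 0 < f x)"
  using sum_nonneg[of A f] sum_nonneg_eq_0_iff[OF assms] assms(2)
  by (auto simp: order_less_le)

lemma ground_nonempty: "ground (H :: 'a::finite \<Rightarrow> real) \<noteq> {}"
proof -
  have "Min (range H) \<in> range H"
    by (rule Min_in) auto
  then obtain s where "H s = Min (range H)"
    by (metis rangeE)
  then have "s \<in> ground H"
    by (simp add: ground_def)
  then show ?thesis by blast
qed

lemma Fmin_subset: "Fmin H C \<subseteq> C"
  by (auto simp: Fmin_def)

lemma Fmin_eq_Min: "finite C \<Longrightarrow> x \<in> Fmin H C \<Longrightarrow> H x = Min (H ` C)"
  unfolding Fmin_def by (intro Min_eqI[symmetric]) auto

lemma Fmin_memI: "finite C \<Longrightarrow> x \<in> C \<Longrightarrow> H x = Min (H ` C) \<Longrightarrow> x \<in> Fmin H C"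
  unfolding Fmin_def by auto

lemma Fmin_nonempty:
  assumes "finite C" "C \<noteq> {}"
  shows "Fmin H C \<noteq> {}"
proof -
  have "Min (H ` C) \<in> H ` C"
    using assms by (intro Min_in) auto
  then obtain x where "x \<in> C" "H x = Min (H ` C)"
    by (metis imageE)
  then show ?thesis
    using Fmin_memI[OF assms(1)] by blast
qed

lemma Min_bdry_le: "z \<in> bdry E (C :: 'a::finite set) \<Longrightarrow> Min (H ` bdry E C) \<le> H z"
  by (rule Min_le) auto

lemma bdry_star_iff:
  fixes C :: "'a::finite set"
  shows "y \<in> bdry_star E H C \<longleftrightarrow> y \<in> bdry E C \<and> H y = Min (H ` bdry E C)"
  unfolding bdry_star_def using Fmin_eq_Min[of "bdry E C" y H] Fmin_memI[of "bdry E C" y H]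
  Fmin_subset[of H "bdry E C"] by auto

lemma Hmin_le: "p \<in> (P :: 'a::finite set) \<Longrightarrow> Hmin H P \<le> H p"
  unfolding Hmin_def by (rule Min_le) auto

lemma Hmin_attained:
  assumes "(P :: 'a::finite set) \<noteq> {}"
  obtains p where "p \<in> P" "H p = Hmin H P"
proof -
  have "Hmin H P \<in> H ` P"
    unfolding Hmin_def using assms by (intro Min_in) auto
  then show thesis
    using that by (metis imageE)
qed

section \<open>Paths and communication heights\<close>

lemma path_height_mem: "w \<noteq> [] \<Longrightarrow> path_height H w \<in> H ` set w"
  unfolding path_height_def by (rule Max_in) auto

lemma le_path_height: "z \<in> set w \<Longrightarrow> H z \<le> path_height H w"
  unfolding path_height_def by (rule Max_ge) auto

lemma path_height_append_tl:
  assumes "w1 \<noteq> []"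
  shows "path_height H (w1 @ tl w2) \<le> max (path_height H w1) (path_height H w2)"
proof -
  have "H z \<le> max (path_height H w1) (path_height H w2)" if "z \<in> set (w1 @ tl w2)" for z
  proof -
    have "z \<in> set w1 \<or> z \<in> set w2"
      using that by (cases w2) auto
    then show ?thesis
      using le_path_height[of z w1 H] le_path_height[of z w2 H] by linarith
  qed
  then show ?thesis
    unfolding path_height_def using assms by (subst Max_le_iff) auto
qed

lemma path_height_mono:
  "w' \<noteq> [] \<Longrightarrow> set w' \<subseteq> set w \<Longrightarrow> path_height H w' \<le> path_height H w"
  unfolding path_height_def by (rule Max_mono) auto

lemma is_path_append_tl:
  assumes "is_path E w1 x y" "is_path E w2 y z"
  shows "is_path E (w1 @ tl w2) x z"
proof -
  obtain r where w2: "w2 = y # r"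
    using assms(2) by (cases w2) (auto simp: is_path_def)
  show ?thesis
  proof (cases "r = []")
    case True
    then show ?thesis using assms w2 by (auto simp: is_path_def)
  next
    case False
    then show ?thesis using assms w2
      by (auto simp: is_path_def successively_append_iff successively_Cons last_append)
  qed
qed

lemma is_path_rev: "symp E \<Longrightarrow> is_path E w x y \<Longrightarrow> is_path E (rev w) y x"
  by (auto simp: is_path_def hd_rev last_rev symp_def elim: successively_mono)

lemma is_path_prefix:
  assumes "is_path E w x y" "z \<in> set w"
  obtains w' where "is_path E w' x z" "set w' \<subseteq> set w"
proof -
  obtain ys zs where w: "w = ys @ z # zs"
    using split_list[OF assms(2)] by blast
  have "successively E ((ys @ [z]) @ zs)" "hd (ys @ [z]) = x"
    using assms(1) unfolding w is_path_def by (auto simp: hd_append)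
  then have "is_path E (ys @ [z]) x z"
    unfolding is_path_def successively_append_iff by simp
  then show thesis
    using that[of "ys @ [z]"] w by auto
qed

lemma is_path_exit:
  assumes "symp E" "is_path E w x y" "x \<in> C" "y \<notin> C"
  obtains z where "z \<in> set w" "z \<in> bdry E C"
proof -
  have "\<exists>z\<in>set w. z \<notin> C"
    using assms(2,4) last_in_set by (auto simp: is_path_def)
  then obtain ys z zs where w: "w = ys @ z # zs" "z \<notin> C" "\<forall>v\<in>set ys. v \<in> C"
    using split_list_first_prop[of w "\<lambda>v. v \<notin> C"] by blast
  have "ys \<noteq> []"
    using assms(2,3) w by (auto simp: is_path_def)
  then have "E (last ys) z" "last ys \<in> C"
    using assms(2) w by (auto simp: is_path_def successively_append_iff)
  then have "z \<in> bdry E C"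
    using assms(1) w(2) by (auto simp: bdry_def symp_def)
  then show thesis
    by (rule that[rotated]) (simp add: w(1))
qed

lemma finite_path_heights:
  fixes E :: "'a::finite \<Rightarrow> 'a \<Rightarrow> bool"
  shows "finite {path_height H w | w. is_path E w x y}"
proof -
  have "{path_height H w | w. is_path E w x y} \<subseteq> range H"
    using path_height_mem by (fastforce simp: is_path_def)
  then show ?thesis
    by (rule finite_subset) simp
qed

lemma Phi_le:
  fixes E :: "'a::finite \<Rightarrow> 'a \<Rightarrow> bool"
  shows "is_path E w x y \<Longrightarrow> Phi E H x y \<le> path_height H w"
  unfolding Phi_def by (rule Min_le[OF finite_path_heights]) blast

lemma finite_Phi_values:
  fixes A :: "'a::finite set"
  shows "finite {Phi E H x y | x y. x \<in> A \<and> y \<in> B}"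
  by (rule finite_subset[of _ "range (case_prod (Phi E H))"]) auto

lemma PhiS_le:
  fixes A :: "'a::finite set"
  shows "a \<in> A \<Longrightarrow> b \<in> B \<Longrightarrow> PhiS E H A B \<le> Phi E H a b"
  unfolding PhiS_def by (rule Min_le[OF finite_Phi_values]) auto

lemma PhiS_attained:
  fixes A :: "'a::finite set"
  assumes "A \<noteq> {}" "B \<noteq> {}"
  obtains a b where "a \<in> A" "b \<in> B" "PhiS E H A B = Phi E H a b"
proof -
  have "PhiS E H A B \<in> {Phi E H x y | x y. x \<in> A \<and> y \<in> B}"
    unfolding PhiS_def using assms by (intro Min_in finite_Phi_values) auto
  then show thesis
    using that by blast
qed

locale landscape =
  fixes E :: "'a::finite \<Rightarrow> 'a \<Rightarrow> bool" and H :: "'a \<Rightarrow> real"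
  assumes sym: "symp E" and connected: "\<forall>x y. E\<^sup>*\<^sup>* x y"
begin

lemma is_path_exists: "\<exists>w. is_path E w x y"
proof -
  have "E\<^sup>*\<^sup>* x y"
    using connected by blast
  then show ?thesis
  proof (induction rule: rtranclp_induct)
    case base
    have "is_path E [x] x x"
      by (simp add: is_path_def)
    then show ?case by blast
  next
    case (step y z)
    then obtain w where "is_path E w x y" by blast
    then have "is_path E (w @ [z]) x z"
      using step(2) by (auto simp: is_path_def successively_append_iff)
    then show ?case by blast
  qed
qed

lemma Phi_attained:
  obtains w where "is_path E w x y" "Phi E H x y = path_height H w"
proof -
  have "Phi E H x y \<in> {path_height H w | w. is_path E w x y}"
    unfolding Phi_def using finite_path_heights is_path_exists by (intro Min_in) auto
  then show thesis
    using that by blast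
qed

lemma H_le_Phi_left: "H x \<le> Phi E H x y"
proof -
  obtain w where "is_path E w x y" "Phi E H x y = path_height H w"
    by (rule Phi_attained)
  then show ?thesis
    using le_path_height[of x w H] hd_in_set by (auto simp: is_path_def)
qed

lemma H_le_Phi_right: "H y \<le> Phi E H x y"
proof -
  obtain w where "is_path E w x y" "Phi E H x y = path_height H w"
    by (rule Phi_attained)
  then show ?thesis
    using le_path_height[of y w H] last_in_set by (auto simp: is_path_def)
qed

lemma Phi_refl [simp]: "Phi E H x x = H x"
proof -
  have "Phi E H x x \<le> path_height H [x]"
    by (rule Phi_le) (simp add: is_path_def)
  then show ?thesis
    using H_le_Phi_left[of x x] by (simp add: path_height_def)
qed

lemma Phi_ultrametric: "Phi E H x z \<le> max (Phi E H x y) (Phi E H y z)"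
proof -
  obtain w1 where w1: "is_path E w1 x y" "Phi E H x y = path_height H w1"
    by (rule Phi_attained)
  obtain w2 where w2: "is_path E w2 y z" "Phi E H y z = path_height H w2"
    by (rule Phi_attained)
  have "Phi E H x z \<le> path_height H (w1 @ tl w2)"
    by (rule Phi_le[OF is_path_append_tl[OF w1(1) w2(1)]])
  also have "\<dots> \<le> max (Phi E H x y) (Phi E H y z)"
    using path_height_append_tl w1 w2 by (auto simp: is_path_def)
  finally show ?thesis .
qed

lemma Phi_sym: "Phi E H x y = Phi E H y x"
proof -
  have "Phi E H y x \<le> Phi E H x y" for x y
  proof -
    obtain w where w: "is_path E w x y" "Phi E H x y = path_height H w"
      by (rule Phi_attained)
    have "Phi E H y x \<le> path_height H (rev w)"
      by (rule Phi_le[OF is_path_rev[OF sym w(1)]])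
    then show ?thesis
      using w(2) by (simp add: path_height_def)
  qed
  then show ?thesis
    by (simp add: order_antisym)
qed

lemma Phi_edge: "E y z \<Longrightarrow> Phi E H x z \<le> max (Phi E H x y) (H z)"
proof -
  assume "E y z"
  then have "Phi E H y z \<le> path_height H [y, z]"
    by (intro Phi_le) (simp add: is_path_def)
  then have "Phi E H y z \<le> max (Phi E H x y) (H z)"
    using H_le_Phi_right[where x = x and y = y] by (simp add: path_height_def)
  then show ?thesis
    using Phi_ultrametric[of x z y] by linarith
qed

lemma Phi_exit:
  assumes "x \<in> C" "y \<notin> C"
  obtains z where "z \<in> bdry E C" "H z \<le> Phi E H x y"
proof -
  obtain w where w: "is_path E w x y" "Phi E H x y = path_height H w"
    by (rule Phi_attained)
  obtain z where "z \<in> set w" "z \<in> bdry E C"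
    using is_path_exit[OF sym w(1) assms] .
  then show thesis
    using that le_path_height[of z w H] w(2) by simp
qed

lemma Fmin_lt_Phi_outside:
  assumes "p \<in> Fmin H C" "q \<notin> C" "0 < depth E H C"
  shows "H p < Phi E H p q"
proof -
  have "p \<in> C"
    using assms(1) Fmin_subset[of H C] by blast
  then obtain z where z: "z \<in> bdry E C" "H z \<le> Phi E H p q"
    using Phi_exit assms(2) by blast
  have "H p = Min (H ` C)"
    using Fmin_eq_Min[OF _ assms(1)] by simp
  then show ?thesis
    using assms(3) Min_bdry_le[OF z(1), of H] z(2) unfolding depth_def by linarith
qed

lemma connected_sublevel_set: "connected_set E {x. Phi E H s x \<le> c}"
  unfolding connected_set_def
proof (intro ballI)
  fix x y
  assume xy: "x \<in> {x. Phi E H s x \<le> c}" "y \<in> {x. Phi E H s x \<le> c}"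
  obtain w where w: "is_path E w x y" "Phi E H x y = path_height H w"
    by (rule Phi_attained)
  have height_w: "path_height H w \<le> c"
    using Phi_ultrametric[of x y s] Phi_sym[of x s] xy w(2) by simp
  have "Phi E H s z \<le> c" if z: "z \<in> set w" for z
  proof -
    obtain w' where w': "is_path E w' x z" "set w' \<subseteq> set w"
      using is_path_prefix[OF w(1) z] .
    then have "Phi E H x z \<le> path_height H w"
      using Phi_le[OF w'(1), where H = H] path_height_mono[of w' w H] by (simp add: is_path_def)
    then show ?thesis
      using Phi_ultrametric[of s z x] Phi_sym[of x s] xy(1) height_w by simp
  qed
  then show "\<exists>w. is_path E w x y \<and> set w \<subseteq> {x. Phi E H s x \<le> c}"
    using w(1) by blast
qed

lemma ground_plateau:
  assumes "s \<in> ground H"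
  shows "{x. Phi E H s x \<le> H s} \<in> plateaux1 E H"
proof -
  define P where "P = {x. Phi E H s x \<le> H s}"
  have s_min: "H s \<le> H z" for z
    using assms by (simp add: ground_def)
  have level: "H x = H s" if "x \<in> P" for x
    using that H_le_Phi_right[where x = s and y = x] s_min[of x] by (simp add: P_def)
  have connected: "connected_set E P"
    unfolding P_def by (rule connected_sublevel_set)
  have bdry_higher: "H x < H y" if x: "x \<in> P" and y: "y \<in> bdry E P" for x y
  proof -
    obtain z where z: "z \<in> P" "E y z" "y \<notin> P"
      using y by (auto simp: bdry_def)
    have "Phi E H s y \<le> max (Phi E H s z) (H y)"
      using z(2) sym by (intro Phi_edge) (simp add: symp_def)
    then show ?thesis
      using z(1,3) level[OF x] by (auto simp: P_def)
  qed
  have "P \<subseteq> Omegabar E H"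
  proof
    fix x
    assume "x \<in> P"
    have "PhiS E H (ground H) {x} \<le> Phi E H s x"
      using assms by (intro PhiS_le) auto
    also have "\<dots> \<le> Phi E H s s"
      using \<open>x \<in> P\<close> by (simp add: P_def)
    also have "\<dots> \<le> Phibar E H"
      unfolding Phibar_def by (rule Max_ge[OF finite_Phi_values]) (use assms in blast)
    finally show "x \<in> Omegabar E H"
      by (simp add: Omegabar_def)
  qed
  moreover have "stable_plateau E H P"
    unfolding stable_plateau_def
  proof (intro conjI)
    have "s \<in> P"
      by (simp add: P_def)
    then show "P \<noteq> {}"
      by blast
    show "\<forall>x\<in>P. \<forall>y\<in>P. H x = H y"
      using level by simp
    show "\<forall>x\<in>P. \<forall>y\<in>bdry E P. H x < H y"
      using bdry_higher by blast
  qed (rule connected)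
  ultimately show ?thesis
    unfolding plateaux1_def P_def by blast
qed

lemma stable_plateau_subset:
  assumes "stable_plateau E H P" "stable_plateau E H Q" "x \<in> P" "x \<in> Q"
  shows "P \<subseteq> Q"
proof
  fix y
  assume "y \<in> P"
  then obtain w where w: "is_path E w x y" "set w \<subseteq> P"
    using assms(1,3) unfolding stable_plateau_def connected_set_def by blast
  show "y \<in> Q"
  proof (rule ccontr)
    assume "y \<notin> Q"
    then obtain z where z: "z \<in> set w" "z \<in> bdry E Q"
      using is_path_exit[OF sym w(1) assms(4)] by blast
    have "H z = H x"
      using assms(1,3) z(1) w(2) unfolding stable_plateau_def by blast
    moreover have "H x < H z"
      using assms(2,4) z(2) unfolding stable_plateau_def by blast
    ultimately show False by simp
  qed
qed

end

section \<open>The collapsed chain and its trace on deep bottoms\<close>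

locale collapsed_chain = landscape E H for E :: "'a::finite \<Rightarrow> 'a \<Rightarrow> bool" and H +
  fixes CC :: "'a set set" and g :: real
  assumes cycles_nonempty: "\<forall>C\<in>CC. C \<noteq> {}"
    and cycles_disjoint: "\<forall>C1\<in>CC. \<forall>C2\<in>CC. C1 \<noteq> C2 \<longrightarrow> C1 \<inter> C2 = {}"
begin

abbreviation "St \<equiv> states E H CC"
abbreviation "Dl \<equiv> Delta E H CC"
abbreviation "R \<equiv> rate E H CC g"
abbreviation "J \<equiv> jump E H CC g"
abbreviation "Bottoms \<equiv> Pl ` (Fmin H ` Cstar E H CC g)"

lemma Fmin_cycle_nonempty: "C \<in> CC \<Longrightarrow> Fmin H C \<noteq> {}"
  using cycles_nonempty by (intro Fmin_nonempty) auto

lemma Fmin_cycle_inj: "C1 \<in> CC \<Longrightarrow> C2 \<in> CC \<Longrightarrow> Fmin H C1 = Fmin H C2 \<Longrightarrow> C1 = C2"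
proof (rule ccontr)
  assume C: "C1 \<in> CC" "C2 \<in> CC" "Fmin H C1 = Fmin H C2" "C1 \<noteq> C2"
  obtain x where "x \<in> Fmin H C1"
    using Fmin_cycle_nonempty[OF C(1)] by auto
  then have "x \<in> C1 \<inter> C2"
    using C(3) Fmin_subset[of H C1] Fmin_subset[of H C2] by auto
  then show False
    using C cycles_disjoint by blast
qed

definition cycle_of :: "'a set \<Rightarrow> 'a set" where
  "cycle_of Q = (THE C. C \<in> CC \<and> Fmin H C = Q)"

lemma cycle_of_Fmin: "C \<in> CC \<Longrightarrow> cycle_of (Fmin H C) = C"
  unfolding cycle_of_def by (rule the_equality) (auto dest: Fmin_cycle_inj)

text \<open>A collapsed cycle is placed at the height of its lowest exit, so that this potential never
  increases along a move of the chain.\<close>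
definition exit_height :: "'a st \<Rightarrow> real" where
  "exit_height u = (case u of Pt x \<Rightarrow> H x | Pl Q \<Rightarrow> Min (H ` bdry E (cycle_of Q)))"

lemma exit_height_Pt [simp]: "exit_height (Pt x) = H x"
  by (simp add: exit_height_def)

lemma exit_height_Pl [simp]: "C \<in> CC \<Longrightarrow> exit_height (Pl (Fmin H C)) = Min (H ` bdry E C)"
  by (simp add: exit_height_def cycle_of_Fmin)

lemma finite_states: "finite St"
  by (simp add: states_def)

lemma Pt_in_states: "x \<in> Dl \<Longrightarrow> Pt x \<in> St"
  by (simp add: states_def)

lemma Pl_in_states: "C \<in> CC \<Longrightarrow> Pl (Fmin H C) \<in> St"
  by (simp add: states_def)

lemma rate_nonneg: "0 \<le> R u w"
  by (cases u; cases w) (auto intro!: sum_nonneg divide_nonneg_nonneg)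

lemma card_neighbours_pos: "x \<in> bdry E C \<Longrightarrow> 0 < card {z \<in> C. E x z}"
  by (auto simp: bdry_def card_gt_0_iff)

lemma rate_Pt_Pt_pos_iff: "0 < R (Pt x) (Pt y) \<longleftrightarrow> x \<in> Dl \<and> y \<in> Dl \<and> E x y \<and> H y \<le> H x"
  by simp

lemma rate_Pt_Pl_pos_iff:
  "0 < R (Pt x) (Pl Q) \<longleftrightarrow> x \<in> Dl \<and> (\<exists>C\<in>CC. Fmin H C = Q \<and> x \<in> bdry E C)"
  using card_neighbours_pos[of x] by (auto simp: sum_pos_iff_ex_pos)

lemma rate_Pl_Pt_pos_iff:
  "0 < R (Pl Q) (Pt y) \<longleftrightarrow>
     y \<in> Dl \<and> (\<exists>C\<in>CC. Fmin H C = Q \<and> depth E H C \<le> g \<and> y \<in> bdry_star E H C)"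
proof -
  have "0 < real (card {z \<in> C. E y z}) / real (card (Fmin H C))"
    if "C \<in> CC" "y \<in> bdry_star E H C" for C
  proof -
    have "y \<in> bdry E C"
      using that(2) by (simp add: bdry_star_iff)
    moreover have "Fmin H C \<noteq> {}"
      using that(1) by (rule Fmin_cycle_nonempty)
    ultimately show ?thesis
      using card_neighbours_pos[of y C] by (simp add: card_gt_0_iff)
  qed
  then show ?thesis
    by (auto simp: sum_pos_iff_ex_pos)
qed

lemma rate_Pl_Pl [simp]: "R (Pl P) (Pl Q) = 0"
  by simp

lemma jump_nonneg: "0 \<le> J u w"
  unfolding jump_def using rate_nonneg by (intro divide_nonneg_nonneg sum_nonneg) auto

lemma jump_pos_iff: "w \<in> St \<Longrightarrow> 0 < J u w \<longleftrightarrow> 0 < R u w"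
proof -
  assume "w \<in> St"
  then have "R u w \<le> (\<Sum>z\<in>St. R u z)"
    using rate_nonneg finite_states by (intro member_le_sum) auto
  then show ?thesis
    unfolding jump_def using rate_nonneg[of u w] by (auto simp: zero_less_divide_iff)
qed

lemma sum_jump_le_1: "(\<Sum>w\<in>St. J u w) \<le> 1"
  unfolding jump_def sum_divide_distrib[symmetric] by (cases "(\<Sum>z\<in>St. R u z) = 0") auto

definition move :: "'a st set \<Rightarrow> 'a st \<Rightarrow> 'a st \<Rightarrow> bool" where
  "move A u w \<longleftrightarrow> u \<notin> A \<and> w \<in> St \<and> 0 < R u w"

abbreviation hit_iter :: "'a st set \<Rightarrow> 'a st \<Rightarrow> nat \<Rightarrow> 'a st \<Rightarrow> real" where
  "hit_iter A t n \<equiv> (hit_step E H CC g A t ^^ n) (\<lambda>_. 0)"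

lemma hit_iter_Suc:
  "hit_iter A t (Suc n) u =
     (if u \<in> A then (if u = t then 1 else 0) else \<Sum>w\<in>St. J u w * hit_iter A t n w)"
  unfolding funpow.simps comp_apply by (rule hit_step_def)

lemma hit_iter_bounds: "0 \<le> hit_iter A t n u \<and> hit_iter A t n u \<le> 1"
proof (induction n arbitrary: u)
  case 0
  then show ?case by simp
next
  case (Suc n)
  have "0 \<le> (\<Sum>w\<in>St. J u w * hit_iter A t n w)"
    using Suc jump_nonneg by (intro sum_nonneg mult_nonneg_nonneg) auto
  moreover have "(\<Sum>w\<in>St. J u w * hit_iter A t n w) \<le> (\<Sum>w\<in>St. J u w)"
    using Suc jump_nonneg by (intro sum_mono mult_right_le_one_le) auto
  ultimately show ?case
    using sum_jump_le_1[of u] unfolding hit_iter_Suc by simp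
qed

lemma hit_iter_pos_iff: "(\<exists>n. 0 < hit_iter A t n u) \<longleftrightarrow> (move A)\<^sup>*\<^sup>* u t \<and> t \<in> A"
proof
  assume "\<exists>n. 0 < hit_iter A t n u"
  then obtain n where "0 < hit_iter A t n u" ..
  then show "(move A)\<^sup>*\<^sup>* u t \<and> t \<in> A"
  proof (induction n arbitrary: u)
    case 0
    then show ?case by simp
  next
    case (Suc n)
    show ?case
    proof (cases "u \<in> A")
      case True
      then show ?thesis
        using Suc.prems unfolding hit_iter_Suc by (simp split: if_splits)
    next
      case False
      then have "0 < (\<Sum>w\<in>St. J u w * hit_iter A t n w)"
        using Suc.prems unfolding hit_iter_Suc by simp
      then obtain w where w: "w \<in> St" "0 < J u w * hit_iter A t n w"
        using jump_nonneg hit_iter_bounds finite_states by (subst (asm) sum_pos_iff_ex_pos) auto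
      then have "0 < J u w" "0 < hit_iter A t n w"
        using jump_nonneg[of u w] hit_iter_bounds[where A = A and t = t and n = n and u = w]
        by (auto simp: zero_less_mult_iff)
      then have "move A u w"
        using False w(1) jump_pos_iff by (simp add: move_def)
      then show ?thesis
        using Suc.IH[OF \<open>0 < hit_iter A t n w\<close>] converse_rtranclp_into_rtranclp by metis
    qed
  qed
next
  assume "(move A)\<^sup>*\<^sup>* u t \<and> t \<in> A"
  then have "(move A)\<^sup>*\<^sup>* u t" and t: "t \<in> A" by auto
  then show "\<exists>n. 0 < hit_iter A t n u"
  proof (induction rule: converse_rtranclp_induct)
    case base
    have "hit_iter A t 1 t = 1"
      using t unfolding One_nat_def hit_iter_Suc by simp
    then show ?case by (metis zero_less_one)
  next
    case (step u w)
    then obtain n where n: "0 < hit_iter A t n w" by blast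
    have m: "u \<notin> A" "w \<in> St" "0 < R u w"
      using step(1) by (auto simp: move_def)
    have "0 < J u w * hit_iter A t n w"
      using jump_pos_iff[OF m(2)] m(3) n by simp
    also have "\<dots> \<le> (\<Sum>z\<in>St. J u z * hit_iter A t n z)"
      using m(2) finite_states jump_nonneg hit_iter_bounds
      by (intro member_le_sum mult_nonneg_nonneg) auto
    also have "\<dots> = hit_iter A t (Suc n) u"
      using m(1) unfolding hit_iter_Suc by simp
    finally show ?case by blast
  qed
qed

lemma bdd_above_hit_iter: "bdd_above (range (\<lambda>n. hit_iter A t n u))"
  using hit_iter_bounds by (intro bdd_aboveI2) blast

lemma hit_prob_nonneg: "0 \<le> hit_prob E H CC g A t u"
  unfolding hit_prob_def by (rule cSUP_upper2[OF bdd_above_hit_iter, of 0]) auto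

lemma hit_prob_pos_iff: "0 < hit_prob E H CC g A t u \<longleftrightarrow> (move A)\<^sup>*\<^sup>* u t \<and> t \<in> A"
  unfolding hit_prob_def less_cSUP_iff[OF UNIV_not_empty bdd_above_hit_iter]
  using hit_iter_pos_iff by simp

lemma trace_rate_pos_iff:
  "0 < trace_rate E H CC g P Q \<longleftrightarrow>
     (\<exists>y\<in>Dl. 0 < R (Pl P) (Pt y) \<and> (move Bottoms)\<^sup>*\<^sup>* (Pt y) (Pl Q) \<and> Pl Q \<in> Bottoms)"
proof -
  have pos_iff: "0 < R (Pl P) (Pt y) * hit_prob E H CC g Bottoms (Pl Q) (Pt y) \<longleftrightarrow>
      0 < R (Pl P) (Pt y) \<and> 0 < hit_prob E H CC g Bottoms (Pl Q) (Pt y)" for y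
    using rate_nonneg[of "Pl P" "Pt y"] hit_prob_nonneg[of Bottoms "Pl Q" "Pt y"]
    by (auto simp: zero_less_mult_iff simp del: rate.simps)
  have "0 < trace_rate E H CC g P Q \<longleftrightarrow>
      (\<exists>y\<in>Dl. 0 < R (Pl P) (Pt y) * hit_prob E H CC g Bottoms (Pl Q) (Pt y))"
    unfolding trace_rate_def
    by (rule sum_pos_iff_ex_pos) (simp, intro mult_nonneg_nonneg rate_nonneg hit_prob_nonneg)
  also have "\<dots> \<longleftrightarrow> (\<exists>y\<in>Dl. 0 < R (Pl P) (Pt y) \<and> 0 < hit_prob E H CC g Bottoms (Pl Q) (Pt y))"
    using pos_iff by blast
  finally show ?thesis
    unfolding hit_prob_pos_iff .
qed

lemma moveE:
  assumes "move A u w"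
  obtains (descend) x y where "u = Pt x" "w = Pt y" "x \<in> Dl" "y \<in> Dl" "E x y" "H y \<le> H x"
    | (enter) x C where "u = Pt x" "w = Pl (Fmin H C)" "C \<in> CC" "x \<in> Dl" "x \<in> bdry E C"
    | (leave) C y where "u = Pl (Fmin H C)" "w = Pt y" "C \<in> CC" "y \<in> Dl"
        "depth E H C \<le> g" "y \<in> bdry_star E H C"
  using assms unfolding move_def
  by (cases u; cases w)
    (auto simp del: rate.simps simp: rate_Pt_Pt_pos_iff rate_Pt_Pl_pos_iff rate_Pl_Pt_pos_iff
      intro: that)

lemma exit_height_move: "move A u w \<Longrightarrow> exit_height w \<le> exit_height u"
  by (erule moveE) (auto simp: Min_bdry_le bdry_star_iff)

lemma moves_in_states: "(move A)\<^sup>*\<^sup>* u w \<Longrightarrow> u \<in> St \<Longrightarrow> w \<in> St"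
  by (induction rule: rtranclp_induct) (auto simp: move_def)

lemma move_reverse:
  assumes "move Bottoms u w" "w \<notin> Bottoms" "u \<in> St" "exit_height w = exit_height u"
  shows "move Bottoms w u"
  using assms(1)
proof (cases rule: moveE)
  case (descend x y)
  then show ?thesis
    using assms(2-4) sym by (auto simp: move_def symp_def)
next
  case (enter x C)
  have "C \<notin> Cstar E H CC g"
    using assms(2) enter(2) by blast
  then have "depth E H C \<le> g"
    using enter(3) by (simp add: Cstar_def)
  moreover have "x \<in> bdry_star E H C"
    using assms(4) enter by (simp add: bdry_star_iff)
  ultimately show ?thesis
    using assms(2,3) enter by (auto simp: move_def rate_Pl_Pt_pos_iff simp del: rate.simps)
next
  case (leave C y)
  then show ?thesis
    using assms(3) by (auto simp: move_def rate_Pt_Pl_pos_iff bdry_star_iff simp del: rate.simps)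
qed

lemma moves_reverse_at_level:
  assumes "(move Bottoms)\<^sup>*\<^sup>* u w" "u \<in> St" "exit_height u \<le> c" "w \<notin> Bottoms" "c \<le> exit_height w"
  shows "(move Bottoms)\<^sup>*\<^sup>* w u" "exit_height w = c"
proof -
  have "(move Bottoms)\<^sup>*\<^sup>* w u \<and> exit_height w = c"
    using assms(1,4,5)
  proof (induction rule: rtranclp_induct)
    case base
    then show ?case
      using assms(3) by auto
  next
    case (step v w)
    have down: "exit_height w \<le> exit_height v"
      using exit_height_move[OF step.hyps(2)] .
    have "v \<notin> Bottoms"
      using step.hyps(2) by (simp add: move_def)
    then have path_back: "(move Bottoms)\<^sup>*\<^sup>* v u" and v_level: "exit_height v = c"
      using step.IH step.prems(2) down by auto
    have "move Bottoms w v"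
      using move_reverse[OF step.hyps(2) step.prems(1) moves_in_states[OF step.hyps(1) assms(2)]]
        down v_level step.prems(2) by simp
    then show ?case
      using path_back v_level down step.prems(2)
        converse_rtranclp_into_rtranclp[of "move Bottoms" w v u]
      by simp
  qed
  then show "(move Bottoms)\<^sup>*\<^sup>* w u" "exit_height w = c" by auto
qed

lemma last_move_enters:
  assumes "(move A)\<^sup>*\<^sup>* (Pt y) (Pl Q)"
  obtains x C where "(move A)\<^sup>*\<^sup>* (Pt y) (Pt x)" "C \<in> CC" "Q = Fmin H C" "x \<in> Dl" "x \<in> bdry E C"
proof -
  obtain v where v: "(move A)\<^sup>*\<^sup>* (Pt y) v" "move A v (Pl Q)"
    using assms by (cases rule: rtranclp.cases) auto
  from v(2) show thesis
    by (cases rule: moveE) (use v(1) that in auto)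
qed

lemma enter_bottom_reversible:
  assumes "y \<in> Dl" "(move Bottoms)\<^sup>*\<^sup>* (Pt y) (Pl (Fmin H C))" "C \<in> CC"
    "H y \<le> Min (H ` bdry E C)"
  obtains x where "x \<in> bdry_star E H C" "H x = H y" "x \<in> Dl" "(move Bottoms)\<^sup>*\<^sup>* (Pt x) (Pt y)"
proof -
  obtain x C' where x: "(move Bottoms)\<^sup>*\<^sup>* (Pt y) (Pt x)" "C' \<in> CC" "Fmin H C = Fmin H C'"
    "x \<in> Dl" "x \<in> bdry E C'"
    using last_move_enters[OF assms(2)] .
  have "C' = C"
    using Fmin_cycle_inj x(2,3) assms(3) by simp
  then have x_bdry: "x \<in> bdry E C"
    using x(5) by simp
  then have "H y \<le> H x"
    using assms(4) Min_bdry_le[of x E C H] by linarith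
  then have "(move Bottoms)\<^sup>*\<^sup>* (Pt x) (Pt y)" "H x = H y"
    using moves_reverse_at_level[OF x(1) Pt_in_states[OF assms(1)], of "H y"] by auto
  moreover have "x \<in> bdry_star E H C"
    using x_bdry assms(4) Min_bdry_le[of x E C H] \<open>H x = H y\<close> by (simp add: bdry_star_iff)
  ultimately show thesis
    using that x(4) by blast
qed

lemma leave_deep_bottom:
  assumes "G \<in> CC" "g \<le> depth E H G" "s \<in> Fmin H G" "0 < R (Pl (Fmin H G)) (Pt y)"
  shows "y \<in> Dl" "y \<in> bdry E G" "H y = g + H s"
proof -
  obtain G' where G': "G' \<in> CC" "Fmin H G' = Fmin H G" "depth E H G' \<le> g"
    "y \<in> bdry_star E H G'" and y: "y \<in> Dl"
    using assms(4) by (auto simp: rate_Pl_Pt_pos_iff simp del: rate.simps)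
  have "G' = G"
    using Fmin_cycle_inj G'(1,2) assms(1) by simp
  then have "y \<in> bdry E G" "H y = Min (H ` bdry E G)" "depth E H G = g"
    using G'(3,4) assms(2) by (auto simp: bdry_star_iff)
  moreover have "H s = Min (H ` G)"
    using Fmin_eq_Min[OF _ assms(3)] by simp
  ultimately show "y \<in> Dl" "y \<in> bdry E G" "H y = g + H s"
    using y unfolding depth_def by auto
qed

lemma trace_rate_from_ground_bottom:
  assumes G: "G \<in> CC" "g \<le> depth E H G" "Fmin H G \<subseteq> ground H"
    and C: "C \<in> CC" "g \<le> depth E H C"
    and pos: "0 < trace_rate E H CC g (Fmin H G) (Fmin H C)"
  shows "Fmin H C \<subseteq> ground H" "0 < trace_rate E H CC g (Fmin H C) (Fmin H G)"
proof -
  obtain s where s: "s \<in> Fmin H G"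
    using Fmin_cycle_nonempty[OF G(1)] by blast
  have s_min: "H s \<le> H z" for z
    using s G(3) by (auto simp: ground_def)
  obtain y where y: "y \<in> Dl" "0 < R (Pl (Fmin H G)) (Pt y)"
    "(move Bottoms)\<^sup>*\<^sup>* (Pt y) (Pl (Fmin H C))"
    using pos unfolding trace_rate_pos_iff by blast
  have y_bdry: "y \<in> bdry E G" and Hy: "H y = g + H s"
    using leave_deep_bottom[OF G(1,2) s y(2)] by auto
  have "H s \<le> Min (H ` C)"
    using s_min cycles_nonempty C(1) by simp
  then have "H y \<le> Min (H ` bdry E C)"
    using Hy C(2) unfolding depth_def by linarith
  then obtain x where x: "x \<in> bdry_star E H C" "H x = H y" "x \<in> Dl"
    "(move Bottoms)\<^sup>*\<^sup>* (Pt x) (Pt y)"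
    using enter_bottom_reversible[OF y(1,3) C(1)] by blast
  have min_C: "Min (H ` C) = H s" and depth_C: "depth E H C \<le> g"
    using x(1,2) Hy \<open>H s \<le> Min (H ` C)\<close> C(2) unfolding bdry_star_iff depth_def by linarith+
  show "Fmin H C \<subseteq> ground H"
    using Fmin_eq_Min[of C _ H] min_C s_min by (auto simp: ground_def)
  have "0 < R (Pl (Fmin H C)) (Pt x)"
    using x(1,3) C(1) depth_C by (auto simp: rate_Pl_Pt_pos_iff simp del: rate.simps)
  moreover have "move Bottoms (Pt y) (Pl (Fmin H G))"
    using y(1) y_bdry G(1) Pl_in_states
    by (auto simp: move_def rate_Pt_Pl_pos_iff simp del: rate.simps)
  moreover have "Pl (Fmin H G) \<in> Bottoms"
    using G(1,2) by (auto simp: Cstar_def)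
  ultimately show "0 < trace_rate E H CC g (Fmin H C) (Fmin H G)"
    unfolding trace_rate_pos_iff using x(3,4) by (meson rtranclp.rtrancl_into_rtrancl)
qed

abbreviation "Pst \<equiv> Pstar E H CC g"
abbreviation "reaches \<equiv> reach E H CC g"
abbreviation "trace_edge \<equiv> \<lambda>P Q. P \<in> Pst \<and> Q \<in> Pst \<and> P \<noteq> Q \<and> 0 < trace_rate E H CC g P Q"

lemma mem_Pstar_iff: "Q \<in> Pst \<longleftrightarrow> (\<exists>C\<in>CC. g \<le> depth E H C \<and> Q = Fmin H C)"
  by (auto simp: Pstar_def Cstar_def)

lemma Pstar_nonempty: "Q \<in> Pst \<Longrightarrow> Q \<noteq> {}"
  using Fmin_cycle_nonempty by (auto simp: mem_Pstar_iff)

lemma Pstar_disjoint: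
  assumes "Q1 \<in> Pst" "Q2 \<in> Pst" "p \<in> Q1" "p \<in> Q2"
  shows "Q1 = Q2"
proof -
  obtain C1 C2 where C: "C1 \<in> CC" "Q1 = Fmin H C1" "C2 \<in> CC" "Q2 = Fmin H C2"
    using assms(1,2) unfolding mem_Pstar_iff by blast
  then have "p \<in> C1 \<inter> C2"
    using assms(3,4) Fmin_subset[of H C1] Fmin_subset[of H C2] by auto
  then have "C1 = C2"
    using C(1,3) cycles_disjoint by blast
  then show ?thesis
    using C(2,4) by simp
qed

lemma reach_from_ground_bottom:
  assumes "G \<in> Pst" "G \<subseteq> ground H" "reaches G Q"
  shows "Q \<subseteq> ground H \<and> reaches Q G"
  using assms(3) unfolding reach_def
proof (induction rule: rtranclp_induct)
  case base
  then show ?case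
    using assms(2) by simp
next
  case (step Q Q')
  obtain CQ where CQ: "CQ \<in> CC" "g \<le> depth E H CQ" "Q = Fmin H CQ"
    using step.hyps(2) unfolding mem_Pstar_iff by blast
  obtain C' where C': "C' \<in> CC" "g \<le> depth E H C'" "Q' = Fmin H C'"
    using step.hyps(2) unfolding mem_Pstar_iff by blast
  have "Q' \<subseteq> ground H" "0 < trace_rate E H CC g Q' Q"
    using trace_rate_from_ground_bottom[OF CQ(1,2) _ C'(1,2)] step CQ(3) C'(3) by auto
  then show ?case
    using step converse_rtranclp_into_rtranclp[of trace_edge Q' Q G] by auto
qed

section \<open>Closed classes of the trace chain\<close>

abbreviation "Cls \<equiv> closed_classes E H CC g"

definition comm_class :: "'a set \<Rightarrow> 'a set set" where
  "comm_class P = {Q \<in> Pst. reaches P Q \<and> reaches Q P}"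

lemma closed_classes_eq: "Cls = {comm_class P | P. P \<in> Pst \<and> (\<forall>Q. reaches P Q \<longrightarrow> reaches Q P)}"
  by (simp add: closed_classes_def comm_class_def)

lemma self_in_comm_class: "P \<in> Pst \<Longrightarrow> P \<in> comm_class P"
  by (simp add: comm_class_def reach_def)

lemma comm_class_eq:
  assumes "Q \<in> comm_class P1" "Q \<in> comm_class P2"
  shows "comm_class P1 = comm_class P2"
proof -
  have "reaches P1 P2" "reaches P2 P1"
    using assms unfolding comm_class_def reach_def by (auto intro: rtranclp_trans)
  then show ?thesis
    unfolding comm_class_def reach_def by (auto intro: rtranclp_trans)
qed

lemma closed_classE:
  assumes "K \<in> Cls"
  obtains P where "P \<in> Pst" "K = comm_class P"
  using assms unfolding closed_classes_eq by blast

lemma closed_class_subset: "K \<in> Cls \<Longrightarrow> K \<subseteq> Pst"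
  by (auto elim: closed_classE simp: comm_class_def)

lemma closed_classes_disjoint: "K1 \<in> Cls \<Longrightarrow> K2 \<in> Cls \<Longrightarrow> Q \<in> K1 \<Longrightarrow> Q \<in> K2 \<Longrightarrow> K1 = K2"
  by (metis closed_classE comm_class_eq)

lemma Union_closed_class_nonempty: "K \<in> Cls \<Longrightarrow> \<Union>K \<noteq> {}"
  by (metis Pstar_nonempty Union_empty_conv closed_classE self_in_comm_class)

lemma inj_on_Union_closed_classes: "inj_on Union Cls"
proof (rule inj_onI)
  fix K1 K2
  assume K: "K1 \<in> Cls" "K2 \<in> Cls" "\<Union>K1 = \<Union>K2"
  obtain P where P: "P \<in> Pst" "K1 = comm_class P"
    using K(1) by (rule closed_classE)
  obtain p where p: "p \<in> P"
    using Pstar_nonempty[OF P(1)] by blast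
  then obtain Q where Q: "Q \<in> K2" "p \<in> Q"
    using K(3) self_in_comm_class[OF P(1)] P(2) by blast
  then have "Q = P"
    using Pstar_disjoint[OF _ P(1) _ p] closed_class_subset[OF K(2)] by blast
  then show "K1 = K2"
    using closed_classes_disjoint[OF K(1,2)] Q(1) self_in_comm_class[OF P(1)] P(2) by blast
qed

lemma closed_classes_separated:
  assumes "0 < g" "K1 \<in> Cls" "K2 \<in> Cls" "K1 \<noteq> K2" "p \<in> \<Union>K1" "q \<in> \<Union>K2"
  shows "Hmin H (\<Union>K1) < Phi E H p q"
proof -
  obtain Q1 Q2 where Q: "Q1 \<in> K1" "p \<in> Q1" "Q2 \<in> K2" "q \<in> Q2"
    using assms(5,6) by blast
  have "Q1 \<in> Pst" "Q2 \<in> Pst"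
    using closed_class_subset[OF assms(2)] closed_class_subset[OF assms(3)] Q(1,3) by blast+
  then obtain C1 C2 where C1: "C1 \<in> CC" "g \<le> depth E H C1" "Q1 = Fmin H C1"
    and C2: "C2 \<in> CC" "Q2 = Fmin H C2"
    unfolding mem_Pstar_iff by blast
  have "Q1 \<noteq> Q2"
    using closed_classes_disjoint[OF assms(2,3)] assms(4) Q(1,3) by blast
  then have "C1 \<noteq> C2"
    using C1(3) C2(2) by blast
  then have "C1 \<inter> C2 = {}"
    using C1(1) C2(1) cycles_disjoint by blast
  then have "q \<notin> C1"
    using Q(4) C2(2) Fmin_subset[of H C2] by blast
  then have "H p < Phi E H p q"
    using Fmin_lt_Phi_outside[of p C1 q] Q(2) C1 assms(1) by simp
  then show ?thesis
    using Hmin_le[of p "\<Union>K1" H] assms(5) by simp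
qed

lemma comm_class_of_ground_bottom:
  assumes "G \<in> Pst" "G \<subseteq> ground H"
  shows "comm_class G \<in> Cls" "\<Union>(comm_class G) \<subseteq> ground H"
proof -
  have "\<forall>Q. reaches G Q \<longrightarrow> reaches Q G"
    using reach_from_ground_bottom[OF assms] by blast
  then show "comm_class G \<in> Cls"
    using assms(1) unfolding closed_classes_eq by blast
  show "\<Union>(comm_class G) \<subseteq> ground H"
    using reach_from_ground_bottom[OF assms] by (auto simp: comm_class_def)
qed

lemma ground_subset_Union_closed_classes:
  assumes "\<And>s. s \<in> ground H \<Longrightarrow> \<exists>G\<in>Pst. s \<in> G \<and> G \<subseteq> ground H"
  shows "ground H \<subseteq> \<Union>(\<Union>Cls)"
proof
  fix s
  assume "s \<in> ground H"
  then obtain G where G: "G \<in> Pst" "s \<in> G" "G \<subseteq> ground H"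
    using assms by blast
  then show "s \<in> \<Union>(\<Union>Cls)"
    using comm_class_of_ground_bottom(1)[OF G(1,3)] self_in_comm_class[OF G(1)] by blast
qed

lemma Union_unique_closed_class:
  assumes "\<And>s. s \<in> ground H \<Longrightarrow> \<exists>G\<in>Pst. s \<in> G \<and> G \<subseteq> ground H"
    and "card Cls = 1" "K \<in> Cls"
  shows "\<Union>K = ground H"
proof -
  have K: "Cls = {K}"
    using assms(2,3) by (metis card_1_singletonE singletonD)
  obtain s where "s \<in> ground H"
    using ground_nonempty by blast
  then obtain G where G: "G \<in> Pst" "G \<subseteq> ground H"
    using assms(1) by blast
  then have "comm_class G = K"
    using comm_class_of_ground_bottom(1)[OF G] K by blast
  then show ?thesis
    using comm_class_of_ground_bottom(2)[OF G] ground_subset_Union_closed_classes[OF assms(1)] K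
    by auto
qed

end

section \<open>Levels of the hierarchy\<close>

locale hierarchy_level = landscape E H for E :: "'a::finite \<Rightarrow> 'a \<Rightarrow> bool" and H +
  fixes Ps inherited :: "'a set set"
  assumes Ps_nonempty: "\<forall>P\<in>Ps. P \<noteq> {}"
    and two_le_card_Ps: "2 \<le> card Ps"
    and inherited_nonempty: "\<forall>C\<in>inherited. C \<noteq> {}"
    and inherited_disjoint: "\<forall>C1\<in>inherited. \<forall>C2\<in>inherited. C1 \<noteq> C2 \<longrightarrow> C1 \<inter> C2 = {}"
    and ground_covered: "ground H \<subseteq> \<Union>Ps"
    and Ps_separated: "\<forall>P\<in>Ps. \<forall>Q\<in>Ps. P \<noteq> Q \<longrightarrow> (\<forall>p\<in>P. \<forall>q\<in>Q. Hmin H P < Phi E H p q)"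
begin

abbreviation "V \<equiv> Vset E H Ps"
abbreviation "Gm \<equiv> Gam E H Ps"
abbreviation "gstar \<equiv> Gstar E H Ps"
abbreviation "cycles \<equiv> level_cycles E H (Ps, inherited)"

lemma level_cycles_eq: "cycles = V ` Ps \<union> {C \<in> inherited. \<forall>P\<in>Ps. C \<inter> V P = {}}"
  by (simp add: level_cycles_def Let_def)

lemma exists_other: "P \<in> Ps \<Longrightarrow> \<exists>Q\<in>Ps. Q \<noteq> P"
proof (rule ccontr)
  assume "P \<in> Ps" "\<not> (\<exists>Q\<in>Ps. Q \<noteq> P)"
  then have "Ps = {P}" by blast
  then show False
    using two_le_card_Ps by simp
qed

lemma PhiS_to_point_attained:
  assumes "P \<in> Ps"
  obtains p where "p \<in> P" "PhiS E H P {x} = Phi E H p x"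
proof -
  have "P \<noteq> {}"
    using Ps_nonempty assms by blast
  then show thesis
    using PhiS_attained[of P "{x}" E H] that by blast
qed

lemma Gam_pos:
  assumes "P \<in> Ps"
  shows "0 < Gm P"
proof -
  obtain Q where Q: "Q \<in> Ps" "Q \<noteq> P"
    using exists_other[OF assms] by blast
  then have "\<Union>(Ps - {P}) \<noteq> {}"
    using Ps_nonempty by blast
  then obtain p q where pq: "p \<in> P" "q \<in> \<Union>(Ps - {P})" "PhiS E H P (\<Union>(Ps - {P})) = Phi E H p q"
    using PhiS_attained[of P] assms Ps_nonempty by metis
  have "Hmin H P < Phi E H p q"
    using Ps_separated assms pq(1,2) by blast
  then show ?thesis
    using pq(3) by (simp add: Gam_def)
qed

lemma Gstar_pos: "0 < gstar"
  unfolding Gstar_def using Gam_pos two_le_card_Ps by (subst Min_gr_iff) auto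

lemma Gstar_le_Gam: "P \<in> Ps \<Longrightarrow> gstar \<le> Gm P"
  unfolding Gstar_def by (rule Min_le) auto

lemma mem_Vset_iff: "x \<in> V P \<longleftrightarrow> PhiS E H P {x} < Hmin H P + Gm P"
  by (auto simp: Vset_def)

lemma minimizer_in_Vset:
  assumes "P \<in> Ps" "p \<in> P" "H p = Hmin H P"
  shows "p \<in> V P"
proof -
  have "PhiS E H P {p} \<le> Hmin H P"
    using PhiS_le[of p P p "{p}" E H] assms(2,3) by simp
  then show ?thesis
    using Gam_pos[OF assms(1)] by (simp add: mem_Vset_iff)
qed

lemma others_not_in_Vset:
  assumes "P \<in> Ps" "Q \<in> Ps" "Q \<noteq> P" "q \<in> Q"
  shows "q \<notin> V P"
proof -
  obtain p where p: "p \<in> P" "PhiS E H P {q} = Phi E H p q"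
    using PhiS_to_point_attained[OF assms(1)] .
  have "PhiS E H P (\<Union>(Ps - {P})) \<le> Phi E H p q"
    using p(1) assms by (intro PhiS_le) auto
  then show ?thesis
    using p(2) by (simp add: mem_Vset_iff Gam_def)
qed

lemma Vset_disjoint:
  assumes "P \<in> Ps" "Q \<in> Ps" "P \<noteq> Q"
  shows "V P \<inter> V Q = {}"
proof (rule ccontr)
  assume "V P \<inter> V Q \<noteq> {}"
  then obtain x where x: "x \<in> V P" "x \<in> V Q" by blast
  obtain p where p: "p \<in> P" "PhiS E H P {x} = Phi E H p x"
    using PhiS_to_point_attained[OF assms(1)] .
  obtain q where q: "q \<in> Q" "PhiS E H Q {x} = Phi E H q x"
    using PhiS_to_point_attained[OF assms(2)] .
  have "PhiS E H P (\<Union>(Ps - {P})) \<le> Phi E H p q"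
    using assms p(1) q(1) by (intro PhiS_le) auto
  then have "Phi E H p x < Phi E H p q"
    using x(1) p(2) by (simp add: mem_Vset_iff Gam_def)
  moreover have "PhiS E H Q (\<Union>(Ps - {Q})) \<le> Phi E H q p"
    using assms p(1) q(1) by (intro PhiS_le) auto
  then have "Phi E H x q < Phi E H p q"
    using x(2) q(2) Phi_sym[of q] by (simp add: mem_Vset_iff Gam_def)
  ultimately show False
    using Phi_ultrametric[of p q x] by linarith
qed

lemma Vset_exit_bound:
  assumes "P \<in> Ps"
  shows "Hmin H P + Gm P \<le> Min (H ` bdry E (V P))"
proof -
  obtain p where p: "p \<in> P" "H p = Hmin H P"
    using Hmin_attained Ps_nonempty assms by metis
  obtain Q q where "Q \<in> Ps" "Q \<noteq> P" "q \<in> Q"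
    using exists_other[OF assms] Ps_nonempty by blast
  then have "q \<notin> V P"
    using others_not_in_Vset assms by blast
  then obtain z where "z \<in> bdry E (V P)"
    using Phi_exit minimizer_in_Vset[OF assms p] by metis
  then have "bdry E (V P) \<noteq> {}" by blast
  moreover have "Hmin H P + Gm P \<le> H x" if x: "x \<in> bdry E (V P)" for x
  proof -
    obtain y where y: "y \<in> V P" "E x y" and "x \<notin> V P"
      using x by (auto simp: bdry_def)
    obtain p' where p': "p' \<in> P" "PhiS E H P {y} = Phi E H p' y"
      using PhiS_to_point_attained[OF assms] .
    have "Phi E H p' x \<le> max (Phi E H p' y) (H x)"
      using y(2) sym by (intro Phi_edge) (simp add: symp_def)
    moreover have "PhiS E H P {x} \<le> Phi E H p' x"
      using p'(1) by (intro PhiS_le) auto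
    ultimately show ?thesis
      using \<open>x \<notin> V P\<close> y(1) p'(2) unfolding mem_Vset_iff by linarith
  qed
  ultimately show ?thesis
    by (subst Min_ge_iff) auto
qed

lemma ground_bottom_of_Vset:
  assumes "s \<in> ground H" "P \<in> Ps" "s \<in> P"
  shows "s \<in> Fmin H (V P)" "Fmin H (V P) \<subseteq> ground H" "gstar \<le> depth E H (V P)"
proof -
  have s_min: "H s \<le> H z" for z
    using assms(1) by (simp add: ground_def)
  obtain p where "p \<in> P" "H p = Hmin H P"
    using Hmin_attained Ps_nonempty assms(2) by metis
  then have Hs: "H s = Hmin H P"
    using Hmin_le[OF assms(3), of H] s_min[of p] by simp
  then have "s \<in> V P"
    using minimizer_in_Vset assms(2,3) by blast
  then have min_V: "Min (H ` V P) = H s"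
    using s_min by (intro Min_eqI) auto
  then show "s \<in> Fmin H (V P)"
    using \<open>s \<in> V P\<close> by (intro Fmin_memI) auto
  show "Fmin H (V P) \<subseteq> ground H"
    using Fmin_eq_Min[of "V P" _ H] min_V s_min by (auto simp: ground_def)
  show "gstar \<le> depth E H (V P)"
    using Vset_exit_bound[OF assms(2)] min_V Hs Gstar_le_Gam[OF assms(2)]
    unfolding depth_def by linarith
qed

lemma Vset_nonempty:
  assumes "P \<in> Ps"
  shows "V P \<noteq> {}"
proof -
  have "P \<noteq> {}"
    using Ps_nonempty assms by blast
  then obtain p where "p \<in> P" "H p = Hmin H P"
    by (rule Hmin_attained)
  then show ?thesis
    using minimizer_in_Vset[OF assms] by blast
qed

lemma level_cycles_nonempty: "\<forall>C\<in>cycles. C \<noteq> {}"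
  using inherited_nonempty Vset_nonempty unfolding level_cycles_eq by blast

lemma level_cycles_disjoint: "\<forall>C1\<in>cycles. \<forall>C2\<in>cycles. C1 \<noteq> C2 \<longrightarrow> C1 \<inter> C2 = {}"
proof (intro ballI impI)
  fix C1 C2
  assume C: "C1 \<in> cycles" "C2 \<in> cycles" "C1 \<noteq> C2"
  consider (valleys) P Q where "P \<in> Ps" "Q \<in> Ps" "C1 = V P" "C2 = V Q"
    | (valley_left) P where "C1 = V P" "C2 \<inter> V P = {}"
    | (valley_right) Q where "C2 = V Q" "C1 \<inter> V Q = {}"
    | (inherited) "C1 \<in> inherited" "C2 \<in> inherited"
    using C(1,2) unfolding level_cycles_eq by blast
  then show "C1 \<inter> C2 = {}"
  proof cases
    case valleys
    then show ?thesis
      using C(3) Vset_disjoint by blast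
  next
    case inherited
    then show ?thesis
      using C(3) inherited_disjoint by blast
  qed auto
qed

end

sublocale hierarchy_level \<subseteq> collapsed_chain E H "level_cycles E H (Ps, inherited)" "Gstar E H Ps"
  using level_cycles_nonempty level_cycles_disjoint by unfold_locales

context hierarchy_level
begin

lemma ground_in_ground_bottom:
  assumes "s \<in> ground H"
  shows "\<exists>G\<in>Pstar E H cycles gstar. s \<in> G \<and> G \<subseteq> ground H"
proof -
  obtain P where P: "P \<in> Ps" "s \<in> P"
    using assms ground_covered by blast
  have "V P \<in> cycles"
    using P(1) unfolding level_cycles_eq by blast
  then have "Fmin H (V P) \<in> Pstar E H cycles gstar"
    using ground_bottom_of_Vset(3)[OF assms P] unfolding mem_Pstar_iff by blast
  then show ?thesis
    using ground_bottom_of_Vset(1,2)[OF assms P] by blast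
qed

lemma Union_unique_level_class:
  assumes "card (level_classes E H (Ps, inherited)) = 1" "K \<in> level_classes E H (Ps, inherited)"
  shows "\<Union>K = ground H"
  using Union_unique_closed_class[OF ground_in_ground_bottom] assms
  unfolding level_classes_def by simp

lemma hierarchy_level_next:
  assumes "2 \<le> card Cls"
  shows "hierarchy_level E H (fst (next_level E H (Ps, inherited))) (snd (next_level E H (Ps, inherited)))"
proof -
  define inherited' where "inherited' =
    {C \<in> Cstar E H cycles gstar. Fmin H C \<in> transient E H cycles gstar} \<union> Csharp E H cycles gstar"
  have inherited'_sub: "inherited' \<subseteq> cycles"
    by (auto simp: inherited'_def Cstar_def Csharp_def)
  have "hierarchy_level E H (Union ` Cls) inherited'"
  proof (intro hierarchy_level.intro hierarchy_level_axioms.intro)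
    show "landscape E"
      by (rule landscape_axioms)
    show "\<forall>P\<in>Union ` Cls. P \<noteq> {}"
      using Union_closed_class_nonempty by blast
    show "2 \<le> card (Union ` Cls)"
      using card_image[OF inj_on_Union_closed_classes] assms by simp
    show "\<forall>C\<in>inherited'. C \<noteq> {}"
      using inherited'_sub level_cycles_nonempty by blast
    show "\<forall>C1\<in>inherited'. \<forall>C2\<in>inherited'. C1 \<noteq> C2 \<longrightarrow> C1 \<inter> C2 = {}"
      using inherited'_sub level_cycles_disjoint by blast
    show "ground H \<subseteq> \<Union>(Union ` Cls)"
      using ground_subset_Union_closed_classes[OF ground_in_ground_bottom] by blast
    show "\<forall>P\<in>Union ` Cls. \<forall>Q\<in>Union ` Cls. P \<noteq> Q \<longrightarrow> (\<forall>p\<in>P. \<forall>q\<in>Q. Hmin H P < Phi E H p q)"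
      using closed_classes_separated[OF Gstar_pos] by blast
  qed
  then show ?thesis
    by (simp add: next_level_def Let_def inherited'_def)
qed

end

context landscape
begin

lemma hierarchy_level_first:
  assumes "2 \<le> card (plateaux1 E H)"
  shows "hierarchy_level E H (plateaux1 E H) {}"
proof (intro hierarchy_level.intro hierarchy_level_axioms.intro)
  show "landscape E"
    by (rule landscape_axioms)
  show "\<forall>P\<in>plateaux1 E H. P \<noteq> {}"
    by (simp add: plateaux1_def stable_plateau_def)
  show "2 \<le> card (plateaux1 E H)"
    by (rule assms)
  show "ground H \<subseteq> \<Union>(plateaux1 E H)"
  proof
    fix s
    assume "s \<in> ground H"
    then have "{x. Phi E H s x \<le> H s} \<in> plateaux1 E H"
      by (rule ground_plateau)
    moreover have "s \<in> {x. Phi E H s x \<le> H s}"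
      by simp
    ultimately show "s \<in> \<Union>(plateaux1 E H)"
      by blast
  qed
  show "\<forall>P\<in>plateaux1 E H. \<forall>Q\<in>plateaux1 E H. P \<noteq> Q \<longrightarrow> (\<forall>p\<in>P. \<forall>q\<in>Q. Hmin H P < Phi E H p q)"
  proof (intro ballI impI)
    fix P Q p q
    assume PQ: "P \<in> plateaux1 E H" "Q \<in> plateaux1 E H" "P \<noteq> Q" and p: "p \<in> P" and q: "q \<in> Q"
    have stable: "stable_plateau E H P" "stable_plateau E H Q"
      using PQ(1,2) by (auto simp: plateaux1_def)
    have "q \<notin> P"
      using stable_plateau_subset[OF stable(1,2) _ q] stable_plateau_subset[OF stable(2,1) q] PQ(3)
      by blast
    then obtain z where "z \<in> bdry E P" "H z \<le> Phi E H p q"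
      using Phi_exit p by blast
    moreover have "H p < H z" if "z \<in> bdry E P" for z
      using stable(1) p that unfolding stable_plateau_def by blast
    ultimately show "Hmin H P < Phi E H p q"
      using Hmin_le[OF p, of H] by fastforce
  qed
qed auto

lemma level_Suc: "1 \<le> h \<Longrightarrow> level E H (Suc h) = next_level E H (level E H h)"
  by (cases h) (simp_all add: level_def)

lemma hierarchy_level_level:
  assumes "2 \<le> card (plateaux1 E H)" "\<forall>h. 1 \<le> h \<and> h < m \<longrightarrow> 2 \<le> nu E H h"
    and "1 \<le> h" "h \<le> m"
  shows "hierarchy_level E H (fst (level E H h)) (snd (level E H h))"
  using assms(3,4)
proof (induction h rule: nat_induct_at_least)
  case base
  then show ?case
    using hierarchy_level_first[OF assms(1)] by (simp add: level_def)
next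
  case (Suc h)
  then have L: "hierarchy_level E H (fst (level E H h)) (snd (level E H h))"
    by simp
  have "2 \<le> nu E H h"
    using assms(2) Suc by simp
  then have "2 \<le> card (closed_classes E H (level_cycles E H (fst (level E H h), snd (level E H h)))
      (Gstar E H (fst (level E H h))))"
    by (simp add: nu_def level_classes_def)
  then show ?case
    using hierarchy_level.hierarchy_level_next[OF L] level_Suc[OF Suc.hyps] by simp
qed

end

theorem mainTheorem8:
  fixes E :: "'a::finite \<Rightarrow> 'a \<Rightarrow> bool" and H :: "'a \<Rightarrow> real" and m :: nat
  assumes "symp E" and "irreflp E" and "\<forall>x y. E\<^sup>*\<^sup>* x y"
    and "card (plateaux1 E H) \<ge> 2"
    and "m \<ge> 1" and "nu E H m = 1"
    and "\<forall>h. 1 \<le> h \<and> h < m \<longrightarrow> nu E H h \<ge> 2"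
  shows "\<forall>K \<in> level_classes E H (level E H m). \<Union>K = ground H"
proof -
  interpret landscape E H
    using assms(1,3) by unfold_locales
  have "hierarchy_level E H (fst (level E H m)) (snd (level E H m))"
    using hierarchy_level_level[OF assms(4,7,5) order_refl] .
  then have "\<Union>K = ground H" if "K \<in> level_classes E H (level E H m)" for K
    using hierarchy_level.Union_unique_level_class[of E H _ _ K] that assms(6) by (simp add: nu_def)
  then show ?thesis
    by blast
qed

end
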